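(* Let $\nabla$ be an ES combination operator satisfying (ESF2), (ESF7) and (ESF8). Then $\nabla$ satisfies (ESF-U).
   Context: Setting: epistemic space $(\mathcal E,B,\mathcal L_{\mathcal P})$ ($\mathcal E$ nonempty, $B:\mathcal E\to$ propositional formulas over finite $\mathcal P$, image modulo equivalence exactly the consistent formulas); agents form a well-ordered set $\mathcal S$; a society is a nonempty finite $N\subseteq\mathcal S$; an $N$-profile is $\Phi:N\to\mathcal E$, $E_i=\Phi(i)$, identified with $E_i$ if $N=\{i\}$; profiles on $\{i_1<\dots<i_n\}$, $\{j_1<\dots<j_m\}$ are equivalent ($\equiv$) if $n=m$ and entries coincide position-wise; $\Phi\upharpoonright_M$ restriction; partition $\{N_1,N_2\}$: nonempty disjoint parts with union $N$. An ES combination operator maps (profile, $E$) to $\nabla(\Phi,E)\in\mathcal E$. (ESF2): if $\Phi\equiv\Phi'$ and $B(E)\equiv B(E')$ then $B(\nabla(\Phi,E))\equiv B(\nabla(\Phi',E'))$. (ESF7): for every partition $\{N_1,N_2\}$ of $N$, $N$-profile $\Phi$, $E$: $B(\nabla(\Phi\upharpoonright_{N_1},E))\wedge B(\nabla(\Phi\upharpoonright_{N_2},E))\vdash B(\nabla(\Phi,E))$. (ESF8): if that conjunction is consistent, then $B(\nabla(\Phi,E))\vdash B(\nabla(\Phi\upharpoonright_{N_1},E))\wedge B(\nabla(\Phi\upharpoonright_{N_2},E))$. (ESF-U): for every society $N$, $N$-profile $\Phi$ and $E$, if $E_i=E_j$ for all $i,j\in N$ then $B(\nabla(\Phi,E))\equiv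 B(\nabla(E_i,E))$ for all $i\in N$. *)

theory Defs
  imports Main "HOL-Library.FuncSet"
begin

datatype 'p form =
    Var 'p
  | Bot
  | Top
  | Neg "'p form"
  | Conj "'p form" "'p form"
  | Disj "'p form" "'p form"
  | Imp "'p form" "'p form"

fun holds :: "('p \<Rightarrow> bool) \<Rightarrow> 'p form \<Rightarrow> bool" where
  "holds v (Var p) = v p"
| "holds v Bot = False"
| "holds v Top = True"
| "holds v (Neg f) = (\<not> holds v f)"
| "holds v (Conj f g) = (holds v f \<and> holds v g)"
| "holds v (Disj f g) = (holds v f \<or> holds v g)"
| "holds v (Imp f g) = (holds v f \<longrightarrow> holds v g)"

definition entails :: "'p form \<Rightarrow> 'p form \<Rightarrow> bool" where
  "entails f g \<longleftrightarrow> (\<forall>v. holds v f \<longrightarrow> holds v g)"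

definition equiv_form :: "'p form \<Rightarrow> 'p form \<Rightarrow> bool" where
  "equiv_form f g \<longleftrightarrow> (\<forall>v. holds v f = holds v g)"

definition consistent :: "'p form \<Rightarrow> bool" where
  "consistent f \<longleftrightarrow> (\<exists>v. holds v f)"

text \<open>The epistemic space is the type 'e (nonempty as every HOL type), with belief
  function B; the propositional variables form the finite type 'p. The image of B
  modulo equivalence is exactly the set of consistent formulas.\<close>

definition epistemic_space :: "('e \<Rightarrow> 'p form) \<Rightarrow> bool" where
  "epistemic_space B \<longleftrightarrow> finite (UNIV :: 'p set)
     \<and> (\<forall>E. consistent (B E))
     \<and> (\<forall>f. consistent f \<longrightarrow> (\<exists>E. equiv_form (B E) f))"

text \<open>An N-profile is represented as a function that is extensional on N (i.e. a function N \<rightarrow> E).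
  An ES combination operator is a function taking the society N, the N-profile and E.\<close>

definition society :: "'a set \<Rightarrow> bool" where
  "society N \<longleftrightarrow> finite N \<and> N \<noteq> {}"

definition profile :: "'a set \<Rightarrow> ('a \<Rightarrow> 'e) \<Rightarrow> bool" where
  "profile N \<Phi> \<longleftrightarrow> society N \<and> \<Phi> \<in> extensional N"

definition profile_equiv :: "'a::wellorder set \<Rightarrow> ('a \<Rightarrow> 'e) \<Rightarrow> 'a set \<Rightarrow> ('a \<Rightarrow> 'e) \<Rightarrow> bool" where
  "profile_equiv N \<Phi> M \<Psi> \<longleftrightarrow>
     map \<Phi> (sorted_list_of_set N) = map \<Psi> (sorted_list_of_set M)"

definition is_partition2 :: "'a set \<Rightarrow> 'a set \<Rightarrow> 'a set \<Rightarrow> bool" where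
  "is_partition2 N N1 N2 \<longleftrightarrow> N1 \<noteq> {} \<and> N2 \<noteq> {} \<and> N1 \<inter> N2 = {} \<and> N1 \<union> N2 = N"

type_synonym ('a, 'e) es_op = "'a set \<Rightarrow> ('a \<Rightarrow> 'e) \<Rightarrow> 'e \<Rightarrow> 'e"

definition ESF2 :: "('e \<Rightarrow> 'p form) \<Rightarrow> ('a::wellorder, 'e) es_op \<Rightarrow> bool" where
  "ESF2 B nabla \<longleftrightarrow> (\<forall>N \<Phi> M \<Psi> E E'.
     profile N \<Phi> \<longrightarrow> profile M \<Psi> \<longrightarrow> profile_equiv N \<Phi> M \<Psi> \<longrightarrow> equiv_form (B E) (B E') \<longrightarrow>
     equiv_form (B (nabla N \<Phi> E)) (B (nabla M \<Psi> E')))"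

definition ESF7 :: "('e \<Rightarrow> 'p form) \<Rightarrow> ('a, 'e) es_op \<Rightarrow> bool" where
  "ESF7 B nabla \<longleftrightarrow> (\<forall>N \<Phi> E N1 N2.
     profile N \<Phi> \<longrightarrow> is_partition2 N N1 N2 \<longrightarrow>
     entails (Conj (B (nabla N1 (restrict \<Phi> N1) E)) (B (nabla N2 (restrict \<Phi> N2) E)))
             (B (nabla N \<Phi> E)))"

definition ESF8 :: "('e \<Rightarrow> 'p form) \<Rightarrow> ('a, 'e) es_op \<Rightarrow> bool" where
  "ESF8 B nabla \<longleftrightarrow> (\<forall>N \<Phi> E N1 N2.
     profile N \<Phi> \<longrightarrow> is_partition2 N N1 N2 \<longrightarrow>
     consistent (Conj (B (nabla N1 (restrict \<Phi> N1) E)) (B (nabla N2 (restrict \<Phi> N2) E))) \<longrightarrow>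
     entails (B (nabla N \<Phi> E))
             (Conj (B (nabla N1 (restrict \<Phi> N1) E)) (B (nabla N2 (restrict \<Phi> N2) E))))"

text \<open>(ESF-U); the single-agent profile E_i is the {i}-profile restrict \<Phi> {i}.\<close>
definition ESF_U :: "('e \<Rightarrow> 'p form) \<Rightarrow> ('a, 'e) es_op \<Rightarrow> bool" where
  "ESF_U B nabla \<longleftrightarrow> (\<forall>N \<Phi> E.
     profile N \<Phi> \<longrightarrow> (\<forall>i\<in>N. \<forall>j\<in>N. \<Phi> i = \<Phi> j) \<longrightarrow>
     (\<forall>i\<in>N. equiv_form (B (nabla N \<Phi> E)) (B (nabla {i} (restrict \<Phi> {i}) E))))"

end

theory Submission
  imports Defs
begin

text \<open>Split a unanimous society into one agent i and the rest M.
  By induction and (ESF2) the rest combines to the same beliefs as i alone, which are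
  consistent; hence the two parts agree consistently, and (ESF7) and (ESF8) pin the
  combination of the whole society down to exactly these beliefs.\<close>

lemma equiv_form_trans: "equiv_form f g \<Longrightarrow> equiv_form g h \<Longrightarrow> equiv_form f h"
  by (simp add: equiv_form_def)

lemma consistent_Conj_equiv:
  "consistent f \<Longrightarrow> equiv_form g f \<Longrightarrow> consistent (Conj f g)"
  by (simp add: consistent_def equiv_form_def)

lemma equiv_form_of_Conj_bounds:
  assumes "equiv_form g f" and "entails (Conj f g) h" and "entails h (Conj f g)"
  shows "equiv_form h f"
  using assms by (auto simp: equiv_form_def entails_def)

lemma ESF2_singleton:
  fixes nabla :: "('a::wellorder, 'e) es_op"
  assumes "ESF2 B nabla" and "\<Phi> i = \<Psi> j"
  shows "equiv_form (B (nabla {i} (restrict \<Phi> {i}) E)) (B (nabla {j} (restrict \<Psi> {j}) E))"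
proof -
  have "profile {k} (restrict \<Phi>' {k})" for k and \<Phi>' :: "'a \<Rightarrow> 'e"
    by (simp add: profile_def society_def)
  moreover have "profile_equiv {i} (restrict \<Phi> {i}) {j} (restrict \<Psi> {j})"
    using assms(2) by (simp add: profile_equiv_def)
  moreover have "equiv_form (B E) (B E)"
    by (simp add: equiv_form_def)
  ultimately show ?thesis
    using assms(1) unfolding ESF2_def by blast
qed

lemma ESF7_ESF8_equiv_parts:
  assumes "epistemic_space B" and "ESF7 B nabla" and "ESF8 B nabla"
    and "profile N \<Phi>" and "is_partition2 N N1 N2"
    and "equiv_form (B (nabla N2 (restrict \<Phi> N2) E)) (B (nabla N1 (restrict \<Phi> N1) E))"
  shows "equiv_form (B (nabla N \<Phi> E)) (B (nabla N1 (restrict \<Phi> N1) E))"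
proof (rule equiv_form_of_Conj_bounds[OF assms(6)])
  show "entails (Conj (B (nabla N1 (restrict \<Phi> N1) E)) (B (nabla N2 (restrict \<Phi> N2) E)))
      (B (nabla N \<Phi> E))"
    using assms(2,4,5) unfolding ESF7_def by blast
  have "consistent (B (nabla N1 (restrict \<Phi> N1) E))"
    using assms(1) by (simp add: epistemic_space_def)
  then have "consistent (Conj (B (nabla N1 (restrict \<Phi> N1) E)) (B (nabla N2 (restrict \<Phi> N2) E)))"
    using assms(6) by (rule consistent_Conj_equiv)
  then show "entails (B (nabla N \<Phi> E))
      (Conj (B (nabla N1 (restrict \<Phi> N1) E)) (B (nabla N2 (restrict \<Phi> N2) E)))"
    using assms(3,4,5) unfolding ESF8_def by blast
qed

lemma unanimous_equiv_singleton:
  fixes nabla :: "('a::wellorder, 'e) es_op"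
  assumes es: "epistemic_space B"
    and esf2: "ESF2 B nabla" and esf7: "ESF7 B nabla" and esf8: "ESF8 B nabla"
    and "finite N" and "N \<noteq> {}" and "\<forall>j\<in>N. \<forall>k\<in>N. \<Phi> j = \<Phi> k" and "i \<in> N"
  shows "equiv_form (B (nabla N (restrict \<Phi> N) E)) (B (nabla {i} (restrict \<Phi> {i}) E))"
  using assms(5-8)
proof (induction N arbitrary: i rule: finite_ne_induct)
  case (singleton x)
  then show ?case by (simp add: equiv_form_def)
next
  case (insert x M)
  obtain j where j: "j \<in> M"
    using \<open>M \<noteq> {}\<close> by blast
  have "equiv_form (B (nabla M (restrict \<Phi> M) E)) (B (nabla {j} (restrict \<Phi> {j}) E))"
    using insert.IH insert.prems(1) j by blast
  moreover have "equiv_form (B (nabla {j} (restrict \<Phi> {j}) E)) (B (nabla {x} (restrict \<Phi> {x}) E))"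
    using ESF2_singleton[OF esf2] insert.prems(1) j by blast
  ultimately have rest_equiv_x:
    "equiv_form (B (nabla M (restrict \<Phi> M) E)) (B (nabla {x} (restrict \<Phi> {x}) E))"
    by (rule equiv_form_trans)
  let ?\<Phi>N = "restrict \<Phi> (insert x M)"
  have "profile (insert x M) ?\<Phi>N"
    using \<open>finite M\<close> by (simp add: profile_def society_def)
  moreover have "is_partition2 (insert x M) {x} M"
    using \<open>x \<notin> M\<close> \<open>M \<noteq> {}\<close> by (auto simp: is_partition2_def)
  moreover have "restrict ?\<Phi>N {x} = restrict \<Phi> {x}" and "restrict ?\<Phi>N M = restrict \<Phi> M"
    by (simp_all add: Int_absorb1 subset_insertI2)
  ultimately have "equiv_form (B (nabla (insert x M) ?\<Phi>N E)) (B (nabla {x} (restrict \<Phi> {x}) E))"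
    using ESF7_ESF8_equiv_parts[OF es esf7 esf8, of "insert x M" ?\<Phi>N "{x}" M E] rest_equiv_x
    by simp
  moreover have "equiv_form (B (nabla {x} (restrict \<Phi> {x}) E)) (B (nabla {i} (restrict \<Phi> {i}) E))"
    using ESF2_singleton[OF esf2] insert.prems by blast
  ultimately show ?case
    by (rule equiv_form_trans)
qed

theorem mainTheorem8:
  fixes B :: "'e \<Rightarrow> 'p form"
    and nabla :: "('a::wellorder, 'e) es_op"
  assumes "epistemic_space B"
    and "ESF2 B nabla" and "ESF7 B nabla" and "ESF8 B nabla"
  shows "ESF_U B nabla"
  unfolding ESF_U_def
proof (intro allI impI ballI)
  fix N :: "'a set" and \<Phi> :: "'a \<Rightarrow> 'e" and E i
  assume profile: "profile N \<Phi>" and "\<forall>i\<in>N. \<forall>j\<in>N. \<Phi> i = \<Phi> j" and "i \<in> N"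
  moreover have "restrict \<Phi> N = \<Phi>"
    using profile by (simp add: profile_def extensional_restrict)
  ultimately show "equiv_form (B (nabla N \<Phi> E)) (B (nabla {i} (restrict \<Phi> {i}) E))"
    using unanimous_equiv_singleton[OF assms] by (metis profile_def society_def)
qed

end
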